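(* For all $k\ge0$, $$\|\mathbf H^{k+1}-\tilde{\mathbf H}^{k+1}\|_F\le\big(1-\delta+2\gamma(1-\delta)\big)\|\mathbf H^k-\tilde{\mathbf H}^k\|_F+4\gamma\|\mathbf E^k\|_F+2\gamma\|\mathbf H^k-\mathbf W^\infty\mathbf H^k\|_F+L_2\|\mathbf x^{k+1}-\mathbf x^k\|.$$
   Context: $W\in\mathbb{R}^{n\times n}$ is entrywise nonnegative, symmetric, $W1_n=1_n$, with $w_{ij}=0$ iff $j$ is neither $i$ nor a neighbor of $i$ in an undirected connected graph. Each $f_i:\mathbb{R}^d\to\mathbb{R}$ is $C^2$ with $L_1$-Lipschitz gradient and $L_2$-Lipschitz Hessian. $\mathcal Q:\mathbb{R}^{d\times d}\to\mathbb{R}^{d\times d}$ is deterministic with $\|\mathcal Q(A)-A\|_F\le(1-\delta)\|A\|_F$, $\delta\in(0,1]$, applied blockwise to $nd\times d$ matrices. Notation: $\mathbf x=[x_1;\dots;x_n]\in\mathbb{R}^{nd}$; $\mathbf W=W\otimes I_d$, $\mathbf W^\infty=\frac1n1_n1_n^T\otimes I_d$; $\nabla^2f(\mathbf x)=[\nabla^2f_1(x_1);\dots;\nabla^2f_n(x_n)]\in\mathbb{R}^{nd\times d}$. With $\gamma>0$, arbitrary points $\mathbf x^k\in\mathbb{R}^{nd}$, and arbitrary $\mathbf E^0,\tilde{\mathbf H}^0$, $H_i^0=\nabla^2f_i(x_i^0)$, the sequences satisfy for $k\ge0$: $\mathbf E^{k+1}=\mathbf E^k+\mathbf H^k-\tilde{\mathbf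 H}^k-\mathcal Q(\mathbf E^k+\mathbf H^k-\tilde{\mathbf H}^k)$; $\tilde{\mathbf H}^{k+1}=\tilde{\mathbf H}^k+\mathcal Q(\mathbf H^k-\tilde{\mathbf H}^k)$; $\hat{\mathbf H}^k=\tilde{\mathbf H}^k+\mathcal Q(\mathbf E^k+\mathbf H^k-\tilde{\mathbf H}^k)$; $\mathbf H^{k+1}=\mathbf H^k-\gamma(I_{nd}-\mathbf W)\hat{\mathbf H}^k+\nabla^2f(\mathbf x^{k+1})-\nabla^2f(\mathbf x^k)$. *)

theory Defs
  imports "HOL-Analysis.Analysis"
begin

text \<open>Agents are indexed by a finite type 'n, coordinates by a finite type 'd.
  A stacked vector x = [x_1;...;x_n] in R^{nd} is an element of real^'d^'n and a
  stacked nd x d matrix [A_1;...;A_n] is an element of real^'d^'d^'n.  The library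
  norm on these iterated Cartesian types is the Euclidean / Frobenius norm.\<close>

type_synonym ('d,'n) stackvec = "real^'d^'n"
type_synonym ('d,'n) stackmat = "real^'d^'d^'n"

text \<open>(W \<otimes> I_d) applied to a stacked matrix: block i is sum_j w_ij A_j.\<close>
definition kronW :: "real^'n^'n \<Rightarrow> real^'d^'d^'n \<Rightarrow> real^'d^'d^'n" where
  "kronW W A = (\<chi> i. \<Sum>j\<in>UNIV. W$i$j *\<^sub>R A$j)"

text \<open>(I_{nd} - W \<otimes> I_d) applied to a stacked matrix.\<close>
definition lapW :: "real^'n^'n \<Rightarrow> real^'d^'d^'n \<Rightarrow> real^'d^'d^'n" where
  "lapW W A = A - kronW W A"

text \<open>W^\<infinity> = (1/n) 1 1^T \<otimes> I_d applied to a stacked matrix.\<close>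
definition avgW :: "real^'d^'d^'n \<Rightarrow> real^'d^'d^'n" where
  "avgW A = (\<chi> i. (1 / real CARD('n)) *\<^sub>R (\<Sum>j\<in>UNIV. A$j))"

definition blockQ :: "(real^'d^'d \<Rightarrow> real^'d^'d) \<Rightarrow> real^'d^'d^'n \<Rightarrow> real^'d^'d^'n" where
  "blockQ Q A = (\<chi> i. Q (A$i))"

definition hess_stack :: "('n \<Rightarrow> real^'d \<Rightarrow> real^'d^'d) \<Rightarrow> real^'d^'n \<Rightarrow> real^'d^'d^'n" where
  "hess_stack hess x = (\<chi> i. hess i (x$i))"

definition connected_graph :: "('n \<Rightarrow> 'n \<Rightarrow> bool) \<Rightarrow> bool" where
  "connected_graph G \<longleftrightarrow> (\<forall>i j. G i j \<longleftrightarrow> G j i) \<and> (\<forall>i. \<not> G i i) \<and> (\<forall>i j. G\<^sup>*\<^sup>* i j)"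

definition mixing_matrix :: "real^'n^'n \<Rightarrow> bool" where
  "mixing_matrix W \<longleftrightarrow>
     (\<forall>i j. W$i$j \<ge> 0) \<and> transpose W = W \<and> W *v (\<chi> i. 1) = (\<chi> i. 1) \<and>
     (\<exists>G. connected_graph G \<and> (\<forall>i j. W$i$j = 0 \<longleftrightarrow> (j \<noteq> i \<and> \<not> G i j)))"

end

theory Submission
  imports Defs
begin

text \<open>With \<open>D = H - Ht\<close>, one step gives \<open>D - Q(D)\<close>, which contracts by \<open>1 - \<delta>\<close>, minus
  \<open>\<gamma> (I - W) Hh\<close> with \<open>Hh = H + E + (Q(E + D) - (E + D))\<close>, plus the Hessian increment.
  Since \<open>W\<close> is doubly stochastic it is a Frobenius-norm contraction, so \<open>I - W\<close> has norm at
  most 2; it also annihilates the average \<open>W\<^sup>\<infinity> H\<close>, which lets \<open>H\<close> be replaced by its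
  consensus error \<open>H - W\<^sup>\<infinity> H\<close>.\<close>

lemma norm_vec_power2: "(norm (x::'a::real_normed_vector^'n))\<^sup>2 = (\<Sum>i\<in>UNIV. (norm (x$i))\<^sup>2)"
  by (simp add: norm_vec_def L2_set_def sum_nonneg)

lemma norm_le_componentwise_scaled_cart:
  fixes x :: "'a::real_normed_vector^'n" and y :: "'b::real_normed_vector^'n"
  assumes "\<And>i. norm (x$i) \<le> c * norm (y$i)" and "0 \<le> c"
  shows "norm x \<le> c * norm y"
  unfolding norm_vec_def L2_set_right_distrib[OF \<open>0 \<le> c\<close>]
  by (rule L2_set_mono) (auto intro: assms)

lemma weighted_mean_power2_le:
  fixes w a :: "'j \<Rightarrow> real"
  assumes "\<And>j. j \<in> S \<Longrightarrow> 0 \<le> w j" and "sum w S = 1"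
  shows "(\<Sum>j\<in>S. w j * a j)\<^sup>2 \<le> (\<Sum>j\<in>S. w j * (a j)\<^sup>2)"
proof -
  define m where "m = (\<Sum>j\<in>S. w j * a j)"
  have "0 \<le> (\<Sum>j\<in>S. w j * (a j - m)\<^sup>2)"
    using assms(1) by (intro sum_nonneg) simp
  also have "\<dots> = (\<Sum>j\<in>S. w j * (a j)\<^sup>2) - 2 * m * (\<Sum>j\<in>S. w j * a j) + m\<^sup>2 * sum w S"
    by (simp add: power2_eq_square algebra_simps sum.distrib sum_subtractf
        sum_distrib_left sum_distrib_right)
  finally show ?thesis
    using assms(2) by (simp add: m_def power2_eq_square)
qed

lemma lipschitz_constant_nonneg:
  fixes g :: "'a::euclidean_space \<Rightarrow> 'b::real_normed_vector"
  assumes "\<And>y z. norm (g y - g z) \<le> L * norm (y - z)"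
  shows "0 \<le> L"
proof -
  obtain b :: 'a where "b \<in> Basis"
    using nonempty_Basis by blast
  then have "0 < norm (b - 0)"
    by (simp add: nonzero_Basis)
  moreover have "0 \<le> L * norm (b - 0)"
    using assms[of b 0] norm_ge_zero order_trans by blast
  ultimately show ?thesis
    by (simp add: zero_le_mult_iff)
qed

lemma mixing_matrix_doubly_stochastic:
  assumes "mixing_matrix W"
  shows "\<And>i j. 0 \<le> W$i$j" and "\<And>i. (\<Sum>j\<in>UNIV. W$i$j) = 1" and "\<And>j. (\<Sum>i\<in>UNIV. W$i$j) = 1"
proof -
  show nonneg: "\<And>i j. 0 \<le> W$i$j"
    using assms by (simp add: mixing_matrix_def)
  have "W *v (\<chi> i. 1) = (\<chi> i. 1)"
    using assms by (simp add: mixing_matrix_def)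
  then show rows: "\<And>i. (\<Sum>j\<in>UNIV. W$i$j) = 1"
    by (simp add: matrix_vector_mult_def vec_eq_iff)
  have "transpose W = W"
    using assms by (simp add: mixing_matrix_def)
  then have "\<And>i j. W$i$j = W$j$i"
    by (metis transpose_def vec_lambda_beta)
  then show "\<And>j. (\<Sum>i\<in>UNIV. W$i$j) = 1"
    using rows by simp
qed

lemma norm_kronW_le:
  fixes A :: "real^'d^'d^'n"
  assumes nonneg: "\<And>i j. 0 \<le> W$i$j"
    and rows: "\<And>i. (\<Sum>j\<in>UNIV. W$i$j) = 1"
    and cols: "\<And>j. (\<Sum>i\<in>UNIV. W$i$j) = 1"
  shows "norm (kronW W A) \<le> norm A"
proof -
  have block: "(norm (kronW W A $ i))\<^sup>2 \<le> (\<Sum>j\<in>UNIV. W$i$j * (norm (A$j))\<^sup>2)" for i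
  proof -
    have "norm (kronW W A $ i) \<le> (\<Sum>j\<in>UNIV. W$i$j * norm (A$j))"
      unfolding kronW_def vec_lambda_beta
      by (rule order_trans[OF norm_sum]) (simp add: nonneg)
    then have "(norm (kronW W A $ i))\<^sup>2 \<le> (\<Sum>j\<in>UNIV. W$i$j * norm (A$j))\<^sup>2"
      by (simp add: power_mono)
    also have "\<dots> \<le> (\<Sum>j\<in>UNIV. W$i$j * (norm (A$j))\<^sup>2)"
      by (rule weighted_mean_power2_le) (use nonneg rows in auto)
    finally show ?thesis .
  qed
  have "(norm (kronW W A))\<^sup>2 \<le> (\<Sum>i\<in>UNIV. \<Sum>j\<in>UNIV. W$i$j * (norm (A$j))\<^sup>2)"
    unfolding norm_vec_power2[of "kronW W A"] by (rule sum_mono) (rule block)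
  also have "\<dots> = (\<Sum>j\<in>UNIV. (\<Sum>i\<in>UNIV. W$i$j) * (norm (A$j))\<^sup>2)"
    by (subst sum.swap) (simp add: sum_distrib_right)
  also have "\<dots> = (norm A)\<^sup>2"
    by (simp add: cols norm_vec_power2)
  finally show ?thesis
    by (rule power2_le_imp_le) simp
qed

lemma linear_lapW: "linear (lapW W)"
  by (rule linearI)
    (simp_all add: lapW_def kronW_def vec_eq_iff sum.distrib scaleR_sum_right algebra_simps)

lemma norm_lapW_le:
  assumes "mixing_matrix W"
  shows "norm (lapW W A) \<le> 2 * norm A"
  using norm_triangle_ineq4[of A "kronW W A"]
    norm_kronW_le[OF mixing_matrix_doubly_stochastic[OF assms], of A]
  unfolding lapW_def by linarith

lemma lapW_avgW:
  fixes W :: "real^'n^'n" and A :: "real^'d^'d^'n"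
  assumes "mixing_matrix W"
  shows "lapW W (avgW A) = 0"
proof -
  have "kronW W (avgW A)
      = (\<chi> i. (\<Sum>j\<in>UNIV. W$i$j) *\<^sub>R ((1 / real CARD('n)) *\<^sub>R (\<Sum>j\<in>UNIV. A$j)))"
    unfolding kronW_def avgW_def by (simp only: vec_lambda_beta scaleR_sum_left)
  then show ?thesis
    by (simp add: mixing_matrix_doubly_stochastic(2)[OF assms] avgW_def lapW_def)
qed

lemma norm_lapW_add_le:
  assumes "mixing_matrix W"
  shows "norm (lapW W (A + X)) \<le> 2 * norm (A - avgW A) + 2 * norm X"
proof -
  have split: "lapW W (A + X) = lapW W (A - avgW A) + lapW W X"
    using linear_lapW[of W] lapW_avgW[OF assms, of A]
    by (metis (no_types) add.right_neutral diff_add_cancel linear_add)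
  show ?thesis
    unfolding split using norm_triangle_ineq[of "lapW W (A - avgW A)" "lapW W X"]
      norm_lapW_le[OF assms, of "A - avgW A"] norm_lapW_le[OF assms, of X]
    by linarith
qed

lemma norm_blockQ_sub_le:
  assumes "\<And>A. norm (Q A - A) \<le> (1 - \<delta>) * norm A" and "\<delta> \<le> 1"
  shows "norm (blockQ Q A - A) \<le> (1 - \<delta>) * norm A"
  by (rule norm_le_componentwise_scaled_cart) (use assms in \<open>simp_all add: blockQ_def\<close>)

lemma norm_compression_residual_le:
  assumes "\<And>A. norm (Q A - A) \<le> (1 - \<delta>) * norm A" and "0 \<le> \<delta>" "\<delta> \<le> 1"
  shows "norm (E + (blockQ Q (E + D) - (E + D))) \<le> 2 * norm E + (1 - \<delta>) * norm D"
proof -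
  have "norm (blockQ Q (E + D) - (E + D)) \<le> (1 - \<delta>) * norm (E + D)"
    using norm_blockQ_sub_le[OF assms(1,3)] .
  also have "\<dots> \<le> (1 - \<delta>) * norm E + (1 - \<delta>) * norm D"
    using norm_triangle_ineq[of E D] \<open>\<delta> \<le> 1\<close>
    by (simp add: mult_left_mono flip: distrib_left)
  also have "\<dots> \<le> 1 * norm E + (1 - \<delta>) * norm D"
    using \<open>0 \<le> \<delta>\<close> by (intro add_right_mono mult_right_mono) simp_all
  finally show ?thesis
    using norm_triangle_ineq[of E "blockQ Q (E + D) - (E + D)"] by linarith
qed

lemma norm_hess_stack_diff_le:
  assumes "\<And>i y z. norm (hess i y - hess i z) \<le> L * norm (y - z)"
  shows "norm (hess_stack hess x - hess_stack hess x') \<le> L * norm (x - x')"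
proof (rule norm_le_componentwise_scaled_cart)
  show "0 \<le> L"
    by (rule lipschitz_constant_nonneg) (rule assms)
qed (simp add: hess_stack_def assms)

theorem lemma7:
  fixes W :: "real^'n^'n"
    and f :: "'n \<Rightarrow> real^'d \<Rightarrow> real"
    and grad :: "'n \<Rightarrow> real^'d \<Rightarrow> real^'d"
    and hess :: "'n \<Rightarrow> real^'d \<Rightarrow> real^'d^'d"
    and L1 L2 \<gamma> \<delta> :: real
    and Q :: "real^'d^'d \<Rightarrow> real^'d^'d"
    and x :: "nat \<Rightarrow> real^'d^'n"
    and E Ht Hh H :: "nat \<Rightarrow> real^'d^'d^'n"
  assumes W: "mixing_matrix W"
    and f_grad: "\<And>i y. (f i has_derivative (\<lambda>h. grad i y \<bullet> h)) (at y)"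
    and f_hess: "\<And>i y. (grad i has_derivative (\<lambda>h. hess i y *v h)) (at y)"
    and hess_cont: "\<And>i. continuous_on UNIV (hess i)"
    and L1: "\<And>i y z. norm (grad i y - grad i z) \<le> L1 * norm (y - z)"
    and L2: "\<And>i y z. norm (hess i y - hess i z) \<le> L2 * norm (y - z)"
    and Q: "\<And>A. norm (Q A - A) \<le> (1 - \<delta>) * norm A"
    and \<delta>: "0 < \<delta>" "\<delta> \<le> 1"
    and \<gamma>: "0 < \<gamma>"
    and H0: "H 0 = hess_stack hess (x 0)"
    and E_rec: "\<And>k. E (Suc k) = E k + H k - Ht k - blockQ Q (E k + H k - Ht k)"
    and Ht_rec: "\<And>k. Ht (Suc k) = Ht k + blockQ Q (H k - Ht k)"
    and Hh_def: "\<And>k. Hh k = Ht k + blockQ Q (E k + H k - Ht k)"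
    and H_rec: "\<And>k. H (Suc k) = H k - \<gamma> *\<^sub>R lapW W (Hh k)
                   + hess_stack hess (x (Suc k)) - hess_stack hess (x k)"
  shows "norm (H (Suc k) - Ht (Suc k))
           \<le> (1 - \<delta> + 2 * \<gamma> * (1 - \<delta>)) * norm (H k - Ht k) + 4 * \<gamma> * norm (E k)
             + 2 * \<gamma> * norm (H k - avgW (H k)) + L2 * norm (x (Suc k) - x k)"
proof -
  define D where "D = H k - Ht k"
  define R where "R = E k + (blockQ Q (E k + D) - (E k + D))"
  define \<Delta> where "\<Delta> = hess_stack hess (x (Suc k)) - hess_stack hess (x k)"
  have "H (Suc k) - Ht (Suc k) = - (blockQ Q D - D) - \<gamma> *\<^sub>R lapW W (H k + R) + \<Delta>"
    unfolding H_rec Ht_rec Hh_def D_def R_def \<Delta>_def by (simp add: algebra_simps)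
  then have "norm (H (Suc k) - Ht (Suc k))
      \<le> norm (blockQ Q D - D) + \<gamma> * norm (lapW W (H k + R)) + norm \<Delta>"
    using \<gamma> norm_triangle_ineq[of "- (blockQ Q D - D) - \<gamma> *\<^sub>R lapW W (H k + R)" \<Delta>]
      norm_triangle_ineq4[of "- (blockQ Q D - D)" "\<gamma> *\<^sub>R lapW W (H k + R)"]
    by (simp only: norm_minus_cancel norm_scaleR abs_of_pos)
  also have "\<dots> \<le> (1 - \<delta>) * norm D + \<gamma> * (2 * norm (H k - avgW (H k)) + 2 * norm R)
      + L2 * norm (x (Suc k) - x k)"
  proof -
    have "\<gamma> * norm (lapW W (H k + R)) \<le> \<gamma> * (2 * norm (H k - avgW (H k)) + 2 * norm R)"
      using norm_lapW_add_le[OF W] \<gamma> by (simp add: mult_left_mono)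
    then show ?thesis
      using norm_blockQ_sub_le[OF Q \<delta>(2), of D]
        norm_hess_stack_diff_le[of hess L2 "x (Suc k)" "x k", OF L2]
      unfolding \<Delta>_def by linarith
  qed
  also have "\<dots> \<le> (1 - \<delta>) * norm D + \<gamma> * (2 * norm (H k - avgW (H k))
      + 2 * (2 * norm (E k) + (1 - \<delta>) * norm D)) + L2 * norm (x (Suc k) - x k)"
    using norm_compression_residual_le[OF Q _ \<delta>(2), of "E k" D] \<delta>(1) \<gamma> unfolding R_def by simp
  finally show ?thesis
    unfolding D_def by (simp add: algebra_simps)
qed

end
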